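(* Let $G_{\|v_0}$ be an initialized prefix-independent game, let $\epsilon\ge0$, let $\lambda^*$ be the least $\epsilon$-fixed point of the negotiation function of $G$, and let $\xi$ be a play starting in $v_0$. If there exists an $\epsilon$-SPE $\bar\sigma$ in $G_{\|v_0}$ such that $\langle\bar\sigma\rangle_{v_0}=\xi$, then $\xi$ is $\lambda^*$-consistent. Conversely, if $G$ is with steady negotiation and $\xi$ is $\lambda^*$-consistent, then there exists an $\epsilon$-SPE $\bar\sigma$ in $G_{\|v_0}$ with $\langle\bar\sigma\rangle_{v_0}=\xi$.
   Context: A game is a tuple $G=(\Pi,V,(V_i)_{i\in\Pi},E,\mu)$ where $\Pi$ is a finite set of players, $(V,E)$ is a finite directed graph in which every vertex has at least one outgoing edge, $(V_i)_{i\in\Pi}$ is a partition of $V$, and $\mu:V^\omega\to\mathbb{R}^\Pi$ is the outcome function. Plays (infinite paths), histories (finite nonempty paths), strategies, profiles, compatibility and $\langle\bar\sigma\rangle_v$ (the play from $v$ generated by a complete profile) are as usual; $G_{\|v_0}$ is $G$ initialized at $v_0$; $-i$ denotes $\Pi\setminus\{i\}$; for a history $hv$, $\bar\sigma_{\|hv}$ is the profile in $G_{\|v}$ with $\sigma_{j\|hv}(h')=\sigma_j(hh')$. $G$ is prefix-independent if $\mu(h\rho)=\mu(\rho)$ for every history $h$ and play $\rho$. For $\epsilon\ge0$, a profile $\bar\sigma$ in $G_{\|v_0}$ is an $\epsilon$-SPE if for every history $hv$ of $G_{\|v_0}$, every player $i$ and every strategy $\sigma'_i$, $\mu_i(h\langle\bar\sigma_{-i\|hv},\sigma'_{i\|hv}\rangle_v)\le\mu_i(h\langle\bar\sigma_{\|hv}\rangle_v)+\epsilon$.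 A requirement is a map $\lambda:V\to\mathbb{R}\cup\{\pm\infty\}$, ordered pointwise. A play $\rho$ is $\lambda$-consistent if for every $i\in\Pi$ and $n$ with $\rho_n\in V_i$, $\mu_i(\rho_n\rho_{n+1}\cdots)\ge\lambda(\rho_n)$. $\lambda\mathrm{Rat}_i(v)$ is the set of profiles $\bar\sigma_{-i}$ in $G_{\|v}$ for which there exists $\sigma_i$ such that for every history $hw$ from $v$ compatible with $\bar\sigma_{-i}$, $\langle\bar\sigma_{\|hw}\rangle_w$ is $\lambda$-consistent. The negotiation function: for $i\in\Pi$, $v\in V_i$, $\mathrm{nego}(\lambda)(v)=\inf_{\bar\sigma_{-i}\in\lambda\mathrm{Rat}_i(v)}\sup_{\sigma_i}\mu_i(\langle\bar\sigma_{-i},\sigma_i\rangle_v)$, $\inf\emptyset=+\infty$. $\lambda$ is an $\epsilon$-fixed point of $\mathrm{nego}$ if $\lambda(v)-\epsilon\le\mathrm{nego}(\lambda)(v)\le\lambda(v)+\epsilon$ for all $v$ (with $\pm\infty\pm\epsilon=\pm\infty$); a least one exists. $G$ is with steady negotiation if for every player $i$, vertex $v$ and requirement $\lambda$, the set $\{\sup_{\sigma_i}\mu_i(\langle\bar\sigma_{-i},\sigma_i\rangle_v)\mid\bar\sigma_{-i}\in\lambda\mathrm{Rat}_i(v)\}$ is empty or has a minimum. *)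

theory Defs
  imports "HOL-Analysis.Analysis"
begin

text \<open>
The vertex set is the (finite) type 'v, the player set is the (finite) type 'p.
The partition (V_i) is given by the owner map own :: 'v => 'p (V_i = {v. own v = i}).
E is the edge relation, mu the outcome function (mu rho i = mu_i(rho)).  A strategy of player i is a function on histories (only its values
on histories ending in V_i matter); a (complete) profile assigns a strategy to each player.
\<close>

definition game :: "('v::finite \<times> 'v) set \<Rightarrow> bool" where
  "game E \<longleftrightarrow> (\<forall>v. \<exists>w. (v, w) \<in> E)"

definition is_play :: "('v \<times> 'v) set \<Rightarrow> (nat \<Rightarrow> 'v) \<Rightarrow> bool" where
  "is_play E \<rho> \<longleftrightarrow> (\<forall>n. (\<rho> n, \<rho> (Suc n)) \<in> E)"

definition is_path :: "('v \<times> 'v) set \<Rightarrow> 'v list \<Rightarrow> bool" where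
  "is_path E h \<longleftrightarrow> h \<noteq> [] \<and> (\<forall>k. Suc k < length h \<longrightarrow> (h ! k, h ! Suc k) \<in> E)"

definition is_history :: "('v \<times> 'v) set \<Rightarrow> 'v \<Rightarrow> 'v list \<Rightarrow> bool" where
  "is_history E v h \<longleftrightarrow> is_path E h \<and> hd h = v"

definition is_strategy :: "('v \<times> 'v) set \<Rightarrow> ('v \<Rightarrow> 'p) \<Rightarrow> 'v \<Rightarrow> 'p \<Rightarrow> ('v list \<Rightarrow> 'v) \<Rightarrow> bool" where
  "is_strategy E own v i \<sigma> \<longleftrightarrow>
     (\<forall>h. is_history E v h \<and> own (last h) = i \<longrightarrow> (last h, \<sigma> h) \<in> E)"

definition is_profile :: "('v \<times> 'v) set \<Rightarrow> ('v \<Rightarrow> 'p) \<Rightarrow> 'v \<Rightarrow> ('p \<Rightarrow> 'v list \<Rightarrow> 'v) \<Rightarrow> bool" where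
  "is_profile E own v \<sigma> \<longleftrightarrow> (\<forall>i. is_strategy E own v i (\<sigma> i))"

text \<open>partial profile sigma_{-i} in G_{||v} (the i-component of sigma is ignored)\<close>
definition is_profile_except :: "('v \<times> 'v) set \<Rightarrow> ('v \<Rightarrow> 'p) \<Rightarrow> 'v \<Rightarrow> 'p \<Rightarrow> ('p \<Rightarrow> 'v list \<Rightarrow> 'v) \<Rightarrow> bool" where
  "is_profile_except E own v i \<sigma> \<longleftrightarrow> (\<forall>j. j \<noteq> i \<longrightarrow> is_strategy E own v j (\<sigma> j))"

fun extend :: "('v \<Rightarrow> 'p) \<Rightarrow> ('p \<Rightarrow> 'v list \<Rightarrow> 'v) \<Rightarrow> 'v list \<Rightarrow> nat \<Rightarrow> 'v list" where
  "extend own \<sigma> h 0 = h"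
| "extend own \<sigma> h (Suc n) =
     (let g = extend own \<sigma> h n in g @ [\<sigma> (own (last g)) g])"

definition outcome :: "('v \<Rightarrow> 'p) \<Rightarrow> ('p \<Rightarrow> 'v list \<Rightarrow> 'v) \<Rightarrow> 'v \<Rightarrow> nat \<Rightarrow> 'v" where
  "outcome own \<sigma> v = (\<lambda>n. last (extend own \<sigma> [v] n))"

text \<open>sigma_{||hv}: sigma_{||hv}(h') = sigma(h h'); here hist = hv\<close>
definition restrict_prof :: "('p \<Rightarrow> 'v list \<Rightarrow> 'v) \<Rightarrow> 'v list \<Rightarrow> ('p \<Rightarrow> 'v list \<Rightarrow> 'v)" where
  "restrict_prof \<sigma> hist = (\<lambda>j h'. \<sigma> j (butlast hist @ h'))"

definition conc :: "'v list \<Rightarrow> (nat \<Rightarrow> 'v) \<Rightarrow> nat \<Rightarrow> 'v" where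
  "conc h \<rho> = (\<lambda>n. if n < length h then h ! n else \<rho> (n - length h))"

definition prefix_independent :: "('v \<times> 'v) set \<Rightarrow> ((nat \<Rightarrow> 'v) \<Rightarrow> 'p \<Rightarrow> real) \<Rightarrow> bool" where
  "prefix_independent E \<mu> \<longleftrightarrow>
     (\<forall>h \<rho>. is_path E h \<and> is_play E \<rho> \<and> (last h, \<rho> 0) \<in> E \<longrightarrow> \<mu> (conc h \<rho>) = \<mu> \<rho>)"

definition eps_SPE ::
  "('v \<times> 'v) set \<Rightarrow> ('v \<Rightarrow> 'p) \<Rightarrow> ((nat \<Rightarrow> 'v) \<Rightarrow> 'p \<Rightarrow> real) \<Rightarrow> real \<Rightarrow> 'v
     \<Rightarrow> ('p \<Rightarrow> 'v list \<Rightarrow> 'v) \<Rightarrow> bool" where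
  "eps_SPE E own \<mu> \<epsilon> v0 \<sigma> \<longleftrightarrow>
     is_profile E own v0 \<sigma> \<and>
     (\<forall>hist i \<tau>. is_history E v0 hist \<and> is_strategy E own v0 i \<tau> \<longrightarrow>
        \<mu> (conc (butlast hist) (outcome own (restrict_prof (\<sigma>(i := \<tau>)) hist) (last hist))) i
          \<le> \<mu> (conc (butlast hist) (outcome own (restrict_prof \<sigma> hist) (last hist))) i + \<epsilon>)"

definition consistent ::
  "('v \<Rightarrow> 'p) \<Rightarrow> ((nat \<Rightarrow> 'v) \<Rightarrow> 'p \<Rightarrow> real) \<Rightarrow> ('v \<Rightarrow> ereal) \<Rightarrow> (nat \<Rightarrow> 'v) \<Rightarrow> bool" where
  "consistent own \<mu> lam \<rho> \<longleftrightarrow>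
     (\<forall>i n. own (\<rho> n) = i \<longrightarrow> ereal (\<mu> (\<lambda>k. \<rho> (n + k)) i) \<ge> lam (\<rho> n))"

definition compatible_except ::
  "('v \<Rightarrow> 'p) \<Rightarrow> 'p \<Rightarrow> ('p \<Rightarrow> 'v list \<Rightarrow> 'v) \<Rightarrow> 'v list \<Rightarrow> bool" where
  "compatible_except own i \<sigma> h \<longleftrightarrow>
     (\<forall>k. Suc k < length h \<and> own (h ! k) \<noteq> i \<longrightarrow> h ! Suc k = \<sigma> (own (h ! k)) (take (Suc k) h))"

text \<open>lambda Rat_i(v), as a set of partial profiles sigma_{-i} (i-component irrelevant)\<close>
definition lamRat ::
  "('v \<times> 'v) set \<Rightarrow> ('v \<Rightarrow> 'p) \<Rightarrow> ((nat \<Rightarrow> 'v) \<Rightarrow> 'p \<Rightarrow> real) \<Rightarrow> ('v \<Rightarrow> ereal) \<Rightarrow> 'p \<Rightarrow> 'v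
     \<Rightarrow> ('p \<Rightarrow> 'v list \<Rightarrow> 'v) set" where
  "lamRat E own \<mu> lam i v =
     {\<sigma>. is_profile_except E own v i \<sigma> \<and>
        (\<exists>\<tau>. is_strategy E own v i \<tau> \<and>
           (\<forall>hist. is_history E v hist \<and> compatible_except own i \<sigma> hist \<longrightarrow>
              consistent own \<mu> lam
                (outcome own (restrict_prof (\<sigma>(i := \<tau>)) hist) (last hist))))}"

definition best_response_value ::
  "('v \<times> 'v) set \<Rightarrow> ('v \<Rightarrow> 'p) \<Rightarrow> ((nat \<Rightarrow> 'v) \<Rightarrow> 'p \<Rightarrow> real) \<Rightarrow> 'p \<Rightarrow> 'v
     \<Rightarrow> ('p \<Rightarrow> 'v list \<Rightarrow> 'v) \<Rightarrow> ereal" where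
  "best_response_value E own \<mu> i v \<sigma> =
     (SUP \<tau>\<in>{\<tau>. is_strategy E own v i \<tau>}. ereal (\<mu> (outcome own (\<sigma>(i := \<tau>)) v) i))"

definition nego ::
  "('v \<times> 'v) set \<Rightarrow> ('v \<Rightarrow> 'p) \<Rightarrow> ((nat \<Rightarrow> 'v) \<Rightarrow> 'p \<Rightarrow> real) \<Rightarrow> ('v \<Rightarrow> ereal) \<Rightarrow> 'v \<Rightarrow> ereal" where
  "nego E own \<mu> lam v =
     (INF \<sigma>\<in>lamRat E own \<mu> lam (own v) v. best_response_value E own \<mu> (own v) v \<sigma>)"

definition eps_fixed_point ::
  "('v \<times> 'v) set \<Rightarrow> ('v \<Rightarrow> 'p) \<Rightarrow> ((nat \<Rightarrow> 'v) \<Rightarrow> 'p \<Rightarrow> real) \<Rightarrow> real \<Rightarrow> ('v \<Rightarrow> ereal) \<Rightarrow> bool" where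
  "eps_fixed_point E own \<mu> \<epsilon> lam \<longleftrightarrow>
     (\<forall>v. lam v - ereal \<epsilon> \<le> nego E own \<mu> lam v \<and> nego E own \<mu> lam v \<le> lam v + ereal \<epsilon>)"

definition least_eps_fixed_point ::
  "('v \<times> 'v) set \<Rightarrow> ('v \<Rightarrow> 'p) \<Rightarrow> ((nat \<Rightarrow> 'v) \<Rightarrow> 'p \<Rightarrow> real) \<Rightarrow> real \<Rightarrow> ('v \<Rightarrow> ereal) \<Rightarrow> bool" where
  "least_eps_fixed_point E own \<mu> \<epsilon> lam \<longleftrightarrow>
     eps_fixed_point E own \<mu> \<epsilon> lam \<and> (\<forall>lam'. eps_fixed_point E own \<mu> \<epsilon> lam' \<longrightarrow> lam \<le> lam')"

definition steady_negotiation ::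
  "('v \<times> 'v) set \<Rightarrow> ('v \<Rightarrow> 'p) \<Rightarrow> ((nat \<Rightarrow> 'v) \<Rightarrow> 'p \<Rightarrow> real) \<Rightarrow> bool" where
  "steady_negotiation E own \<mu> \<longleftrightarrow>
     (\<forall>i v lam. let S = best_response_value E own \<mu> i v ` lamRat E own \<mu> lam i v
              in S = {} \<or> (\<exists>m\<in>S. \<forall>x\<in>S. m \<le> x))"

end

theory Submission
  imports Defs
begin

text \<open>
If \<open>\<sigma>\<close> is an \<open>\<epsilon>\<close>-SPE from \<open>v\<close>, then by prefix independence every subgame profile of \<open>\<sigma>\<close> is again
an \<open>\<epsilon>\<close>-SPE.  Hence the requirement \<open>\<lambda>\<^sub>S\<^sub>P\<^sub>E(v)\<close>, the least payoff the owner of \<open>v\<close> gets in an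
\<open>\<epsilon>\<close>-SPE from \<open>v\<close>, makes every \<open>\<epsilon>\<close>-SPE outcome consistent, and each \<open>\<epsilon>\<close>-SPE from \<open>v\<close> is a
\<open>\<lambda>\<^sub>S\<^sub>P\<^sub>E\<close>-rational environment showing \<open>nego(\<lambda>\<^sub>S\<^sub>P\<^sub>E)(v) - \<epsilon> \<le> \<lambda>\<^sub>S\<^sub>P\<^sub>E(v)\<close>.  The least fixed point of
\<open>nego - \<epsilon>\<close> is an \<open>\<epsilon>\<close>-fixed point below \<open>\<lambda>\<^sub>S\<^sub>P\<^sub>E\<close>, so \<open>\<lambda>\<^sup>* \<le> \<lambda>\<^sub>S\<^sub>P\<^sub>E\<close>.

Conversely, steady negotiation provides for every vertex \<open>u\<close> with \<open>\<lambda>\<^sup>*(u) < \<infinity>\<close> a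
\<open>\<lambda>\<^sup>*\<close>-rational profile keeping the owner of \<open>u\<close> below \<open>\<lambda>\<^sup>*(u) + \<epsilon>\<close>.  The \<open>\<epsilon>\<close>-SPE follows
\<open>\<xi>\<close> until a deviation and then plays the punishment of the vertex where the last relevant
deviation happened; a new deviation by the punished player only restarts the punishment if
it lowers the requirement of the punished vertex.  Along a play where player \<open>i\<close> deviates,
this requirement is therefore non-increasing, so by finiteness the punished vertex is
eventually constant, and \<open>i\<close> gets at most \<open>\<lambda>\<^sup>*(u) + \<epsilon>\<close>, which by \<open>\<lambda>\<^sup>*\<close>-consistency of the
plan is at most \<open>i\<close>'s payoff without deviation plus \<open>\<epsilon>\<close>.
\<close>

section \<open>Plays generated by a profile\<close>

definition play_prefix :: "(nat \<Rightarrow> 'v) \<Rightarrow> nat \<Rightarrow> 'v list" where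
  "play_prefix \<rho> n = map \<rho> [0..<n]"

definition play_suffix :: "nat \<Rightarrow> (nat \<Rightarrow> 'v) \<Rightarrow> nat \<Rightarrow> 'v" where
  "play_suffix n \<rho> = (\<lambda>k. \<rho> (n + k))"

text \<open>The \<open>m\<close>-th vertex is already fixed in \<open>extend own X h m\<close>, whose length exceeds \<open>m\<close>.\<close>

definition play_from :: "('v \<Rightarrow> 'p) \<Rightarrow> ('p \<Rightarrow> 'v list \<Rightarrow> 'v) \<Rightarrow> 'v list \<Rightarrow> nat \<Rightarrow> 'v" where
  "play_from own X h m = extend own X h m ! m"

definition generates :: "('v \<Rightarrow> 'p) \<Rightarrow> ('p \<Rightarrow> 'v list \<Rightarrow> 'v) \<Rightarrow> 'v list \<Rightarrow> (nat \<Rightarrow> 'v) \<Rightarrow> bool" where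
  "generates own X h \<rho> \<longleftrightarrow> play_prefix \<rho> (length h) = h \<and>
     (\<forall>m. length h \<le> Suc m \<longrightarrow> \<rho> (Suc m) = X (own (\<rho> m)) (play_prefix \<rho> (Suc m)))"

lemma length_play_prefix [simp]: "length (play_prefix \<rho> n) = n"
  by (simp add: play_prefix_def)

lemma nth_play_prefix [simp]: "k < n \<Longrightarrow> play_prefix \<rho> n ! k = \<rho> k"
  by (simp add: play_prefix_def)

lemma play_prefix_Suc: "play_prefix \<rho> (Suc n) = play_prefix \<rho> n @ [\<rho> n]"
  by (simp add: play_prefix_def)

lemma last_play_prefix [simp]: "last (play_prefix \<rho> (Suc n)) = \<rho> n"
  by (simp add: play_prefix_Suc)

lemma play_prefix_Suc_not_Nil [simp]: "play_prefix \<rho> (Suc n) \<noteq> []"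
  by (simp add: play_prefix_Suc)

lemma hd_play_prefix [simp]: "hd (play_prefix \<rho> (Suc n)) = \<rho> 0"
  by (simp add: play_prefix_def hd_map upt_rec)

lemma play_prefix_eq_iff: "play_prefix \<rho> n = play_prefix \<rho>' n \<longleftrightarrow> (\<forall>k<n. \<rho> k = \<rho>' k)"
  by (auto simp: play_prefix_def)

lemma take_play_prefix: "m \<le> n \<Longrightarrow> take m (play_prefix \<rho> n) = play_prefix \<rho> m"
  by (simp add: play_prefix_def take_map)

lemma play_suffix_apply [simp]: "play_suffix n \<rho> k = \<rho> (n + k)"
  by (simp add: play_suffix_def)

lemma play_suffix_0 [simp]: "play_suffix 0 \<rho> = \<rho>"
  by (simp add: play_suffix_def)

lemma play_suffix_play_suffix [simp]: "play_suffix a (play_suffix b \<rho>) = play_suffix (b + a) \<rho>"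
  by (simp add: play_suffix_def add.assoc)

lemma play_prefix_play_suffix: "play_prefix (play_suffix k \<rho>) n = drop k (play_prefix \<rho> (k + n))"
  by (rule nth_equalityI) auto

lemma play_prefix_conc: "play_prefix (conc l \<rho>) (length l + n) = l @ play_prefix \<rho> n"
  by (rule nth_equalityI) (auto simp: conc_def nth_append)

lemma play_suffix_conc: "play_suffix (length l) (conc l \<rho>) = \<rho>"
  by (rule ext) (simp add: conc_def)

lemma length_extend [simp]: "length (extend own X h n) = length h + n"
  by (induction n) (auto simp: Let_def)

lemma nth_extend_add:
  "k < length (extend own X h m) \<Longrightarrow> extend own X h (m + d) ! k = extend own X h m ! k"
  by (induction d) (auto simp: Let_def nth_append)

lemma extend_eq_play_prefix:
  assumes "h \<noteq> []"
  shows "extend own X h n = play_prefix (play_from own X h) (length h + n)"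
proof (rule nth_equalityI)
  fix k assume k: "k < length (extend own X h n)"
  show "extend own X h n ! k = play_prefix (play_from own X h) (length h + n) ! k"
  proof (cases "k \<le> n")
    case True
    then obtain d where "n = k + d" using le_Suc_ex by blast
    with k assms show ?thesis by (simp add: play_from_def nth_extend_add)
  next
    case False
    then obtain d where "k = n + d" by (metis le_Suc_ex nat_le_linear)
    with k show ?thesis by (simp add: play_from_def nth_extend_add)
  qed
qed simp

lemma generates_play_from:
  assumes "h \<noteq> []"
  shows "generates own X h (play_from own X h)"
  unfolding generates_def
proof (intro conjI allI impI)
  show "play_prefix (play_from own X h) (length h) = h"
    using extend_eq_play_prefix[OF assms, of own X 0] by simp
next
  fix m assume m: "length h \<le> Suc m"
  define n where "n = Suc m - length h"
  have len: "length h + n = Suc m" using m by (simp add: n_def)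
  define g where "g = extend own X h n"
  have g: "g = play_prefix (play_from own X h) (Suc m)"
    using extend_eq_play_prefix[OF assms, of own X n] len by (simp add: g_def)
  have "play_prefix (play_from own X h) (Suc (Suc m)) = extend own X h (Suc n)"
    using extend_eq_play_prefix[OF assms, of own X "Suc n"] len by simp
  also have "\<dots> = g @ [X (own (last g)) g]" by (simp add: g_def Let_def)
  finally have "play_from own X h (Suc m) = (g @ [X (own (last g)) g]) ! Suc m"
    by (metis lessI nth_play_prefix)
  then show "play_from own X h (Suc m) = X (own (play_from own X h m)) (play_prefix (play_from own X h) (Suc m))"
    using g by (simp add: nth_append)
qed

lemma generates_unique:
  assumes "h \<noteq> []" "generates own X h \<rho>\<^sub>1" "generates own X h \<rho>\<^sub>2"
  shows "\<rho>\<^sub>1 = \<rho>\<^sub>2"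
proof
  fix m show "\<rho>\<^sub>1 m = \<rho>\<^sub>2 m"
  proof (induction m rule: less_induct)
    case (less m)
    show ?case
    proof (cases "m < length h")
      case True
      then show ?thesis using assms unfolding generates_def by (metis nth_play_prefix)
    next
      case False
      then obtain m' where m': "m = Suc m'" "length h \<le> Suc m'"
        using assms(1) by (cases m) auto
      have "play_prefix \<rho>\<^sub>1 (Suc m') = play_prefix \<rho>\<^sub>2 (Suc m')"
        using less m' by (simp add: play_prefix_eq_iff)
      moreover have "\<rho>\<^sub>1 m' = \<rho>\<^sub>2 m'" using less m' by simp
      ultimately show ?thesis using assms m' unfolding generates_def by metis
    qed
  qed
qed

lemma play_from_eqI: "h \<noteq> [] \<Longrightarrow> generates own X h \<rho> \<Longrightarrow> play_from own X h = \<rho>"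
  using generates_play_from generates_unique by metis

lemma play_from_nth:
  assumes "k < length h"
  shows "play_from own X h k = h ! k"
proof -
  have "h \<noteq> []" using assms by auto
  then have "play_prefix (play_from own X h) (length h) = h"
    using generates_play_from unfolding generates_def by blast
  then show ?thesis using assms by (metis nth_play_prefix)
qed

lemma play_from_Suc:
  "h \<noteq> [] \<Longrightarrow> length h \<le> Suc m \<Longrightarrow>
   play_from own X h (Suc m) = X (own (play_from own X h m)) (play_prefix (play_from own X h) (Suc m))"
  using generates_play_from[of h own X] unfolding generates_def by blast

lemma outcome_eq_play_from: "outcome own X v = play_from own X [v]"
proof
  fix n show "outcome own X v n = play_from own X [v] n"
    using extend_eq_play_prefix[of "[v]" own X n] by (simp add: outcome_def)
qed

lemma play_from_play_prefix:
  assumes "h \<noteq> []" "length h \<le> n"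
  shows "play_from own X (play_prefix (play_from own X h) n) = play_from own X h"
proof (rule play_from_eqI)
  show "play_prefix (play_from own X h) n \<noteq> []" using assms by (cases n) auto
  show "generates own X (play_prefix (play_from own X h) n) (play_from own X h)"
    using generates_play_from[OF assms(1), of own X] assms(2) unfolding generates_def by auto
qed

lemma conc_play_from_restrict_prof:
  assumes "h \<noteq> []" "g \<noteq> []"
  shows "conc (butlast h) (play_from own (restrict_prof X h) g) = play_from own X (butlast h @ g)"
proof (rule sym, rule play_from_eqI)
  show "butlast h @ g \<noteq> []" using assms by simp
  define l where "l = butlast h"
  define \<rho> where "\<rho> = play_from own (restrict_prof X h) g"
  have gen: "generates own (restrict_prof X h) g \<rho>"
    unfolding \<rho>_def by (rule generates_play_from[OF assms(2)])
  show "generates own X (butlast h @ g) (conc (butlast h) (play_from own (restrict_prof X h) g))"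
    unfolding l_def[symmetric] \<rho>_def[symmetric] generates_def
  proof (intro conjI allI impI)
    show "play_prefix (conc l \<rho>) (length (l @ g)) = l @ g"
      using play_prefix_conc[of l \<rho> "length g"] gen by (simp add: generates_def)
  next
    fix m assume m: "length (l @ g) \<le> Suc m"
    define k where "k = m - length l"
    have mk: "m = length l + k" and gk: "length g \<le> Suc k"
      using m assms(2) by (auto simp: k_def, cases g, auto)
    have "conc l \<rho> (Suc m) = \<rho> (Suc k)" using mk by (simp add: conc_def)
    also have "\<dots> = restrict_prof X h (own (\<rho> k)) (play_prefix \<rho> (Suc k))"
      using gen gk unfolding generates_def by blast
    also have "\<dots> = X (own (conc l \<rho> m)) (play_prefix (conc l \<rho>) (Suc m))"
      using mk by (simp add: restrict_prof_def l_def conc_def play_prefix_conc[symmetric])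
    finally show "conc l \<rho> (Suc m) = X (own (conc l \<rho> m)) (play_prefix (conc l \<rho>) (Suc m))" .
  qed
qed

lemma play_suffix_play_from:
  "h \<noteq> [] \<Longrightarrow> g \<noteq> [] \<Longrightarrow>
   play_suffix (length h - 1) (play_from own X (butlast h @ g)) = play_from own (restrict_prof X h) g"
  using conc_play_from_restrict_prof[of h g own X] play_suffix_conc[of "butlast h"]
  by (metis length_butlast)

lemma conc_outcome_restrict_prof:
  "h \<noteq> [] \<Longrightarrow> conc (butlast h) (outcome own (restrict_prof X h) (last h)) = play_from own X h"
  using conc_play_from_restrict_prof[of h "[last h]" own X] by (simp add: outcome_eq_play_from)

lemma outcome_restrict_prof:
  "h \<noteq> [] \<Longrightarrow> outcome own (restrict_prof X h) (last h) = play_suffix (length h - 1) (play_from own X h)"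
  using play_suffix_play_from[of h "[last h]" own X] by (simp add: outcome_eq_play_from)

lemma is_path_play_prefix:
  "is_path E (play_prefix \<rho> (Suc m)) \<longleftrightarrow> (\<forall>k<m. (\<rho> k, \<rho> (Suc k)) \<in> E)"
  by (auto simp: is_path_def)

lemma is_history_play_prefix:
  "is_history E v (play_prefix \<rho> (Suc m)) \<longleftrightarrow> \<rho> 0 = v \<and> (\<forall>k<m. (\<rho> k, \<rho> (Suc k)) \<in> E)"
  by (auto simp: is_history_def is_path_play_prefix)

lemma is_history_play_prefixI:
  "is_play E \<rho> \<Longrightarrow> \<rho> 0 = v \<Longrightarrow> is_history E v (play_prefix \<rho> (Suc m))"
  by (simp add: is_history_play_prefix is_play_def)

lemma is_history_singleton: "is_history E v [v]"
  by (simp add: is_history_def is_path_def)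

lemma is_history_not_Nil: "is_history E v h \<Longrightarrow> h \<noteq> []"
  by (simp add: is_history_def is_path_def)

lemma is_path_snoc: assumes "xs \<noteq> []" shows "is_path E (xs @ [x]) \<longleftrightarrow> is_path E xs \<and> (last xs, x) \<in> E"
proof
  assume p: "is_path E (xs @ [x])"
  have "(xs ! k, xs ! Suc k) \<in> E" if "Suc k < length xs" for k
  proof -
    have "((xs @ [x]) ! k, (xs @ [x]) ! Suc k) \<in> E" using p that unfolding is_path_def by simp
    then show ?thesis using that by (simp add: nth_append)
  qed
  moreover have "(last xs, x) \<in> E"
  proof -
    have "Suc (length xs - 1) < length (xs @ [x])" using assms by simp
    then have "((xs @ [x]) ! (length xs - 1), (xs @ [x]) ! Suc (length xs - 1)) \<in> E"
      using p unfolding is_path_def by blast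
    then show ?thesis using assms by (simp add: nth_append last_conv_nth)
  qed
  ultimately show "is_path E xs \<and> (last xs, x) \<in> E" using assms by (simp add: is_path_def)
next
  assume p: "is_path E xs \<and> (last xs, x) \<in> E"
  show "is_path E (xs @ [x])" unfolding is_path_def
  proof (intro conjI allI impI)
    fix k assume k: "Suc k < length (xs @ [x])"
    show "((xs @ [x]) ! k, (xs @ [x]) ! Suc k) \<in> E"
    proof (cases "Suc k < length xs")
      case True then show ?thesis using p by (simp add: is_path_def nth_append)
    next
      case False
      hence kk: "k = length xs - 1" using k by simp
      then show ?thesis using p assms by (simp add: nth_append last_conv_nth)
    qed
  qed simp
qed

lemma is_path_append:
  "a \<noteq> [] \<Longrightarrow> is_path E a \<Longrightarrow> is_path E (last a # b) \<Longrightarrow> is_path E (a @ b)"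
proof (induction b rule: rev_induct)
  case (snoc x b)
  have "is_path E (last a # b) \<and> (last (last a # b), x) \<in> E"
    using is_path_snoc[of "last a # b" E x] snoc.prems by simp
  then show ?case using snoc is_path_snoc[of "a @ b" E x] by (cases b) auto
qed simp

lemma is_history_continue:
  assumes "is_history E v h" "is_history E (last h) g"
  shows "is_history E v (butlast h @ g)"
proof -
  have hne: "h \<noteq> []" and gne: "g \<noteq> []" using assms by (auto simp: is_history_def is_path_def)
  have g: "g = last h # tl g" using assms gne by (auto simp: is_history_def) (metis list.collapse)
  have "butlast h @ g = h @ tl g"
    using hne g by (metis append_butlast_last_id append_Cons append_Nil append_assoc)
  moreover have "is_path E (h @ tl g)"
    using is_path_append[of h E "tl g"] assms g hne by (simp add: is_history_def)
  ultimately show ?thesis using assms hne by (simp add: is_history_def)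
qed

lemma is_profile_fun_upd:
  "is_profile E own v X \<Longrightarrow> is_strategy E own v i \<tau> \<Longrightarrow> is_profile E own v (X(i := \<tau>))"
  by (simp add: is_profile_def)

lemma is_play_play_from:
  assumes "is_profile E own v X" "is_history E v h"
  shows "is_play E (play_from own X h)" and "play_from own X h 0 = v"
proof -
  define \<rho> where "\<rho> = play_from own X h"
  have hne: "h \<noteq> []" using assms(2) by (rule is_history_not_Nil)
  show \<rho>0: "play_from own X h 0 = v"
    using assms(2) hne by (simp add: play_from_nth is_history_def hd_conv_nth)
  have "(\<rho> n, \<rho> (Suc n)) \<in> E" for n
  proof (induction n rule: less_induct)
    case (less n)
    show ?case
    proof (cases "Suc n < length h")
      case True
      then show ?thesis using assms(2) by (simp add: \<rho>_def play_from_nth is_history_def is_path_def)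
    next
      case False
      then have "\<rho> (Suc n) = X (own (\<rho> n)) (play_prefix \<rho> (Suc n))"
        using play_from_Suc[OF hne, of n] by (simp add: \<rho>_def)
      moreover have "is_history E v (play_prefix \<rho> (Suc n))"
        using less \<rho>0 by (simp add: is_history_play_prefix \<rho>_def)
      ultimately show ?thesis using assms(1) unfolding is_profile_def is_strategy_def by auto
    qed
  qed
  then show "is_play E (play_from own X h)" by (simp add: is_play_def \<rho>_def)
qed

lemma is_history_play_prefix_play_from:
  "is_profile E own v X \<Longrightarrow> is_history E v h \<Longrightarrow> is_history E v (play_prefix (play_from own X h) (Suc m))"
  using is_play_play_from is_history_play_prefixI by metis

lemma play_from_cong:
  assumes "is_profile E own v X" "is_history E v h"
    and "\<And>j g. is_history E v g \<Longrightarrow> X j g = Y j g"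
  shows "play_from own X h = play_from own Y h"
proof -
  have hne: "h \<noteq> []" using assms(2) by (rule is_history_not_Nil)
  have "generates own Y h (play_from own X h)"
    using generates_play_from[OF hne, of own X] is_history_play_prefix_play_from[OF assms(1,2)] assms(3)
    unfolding generates_def by metis
  then show ?thesis using play_from_eqI[OF hne] by metis
qed

lemma is_profile_restrict_prof:
  assumes "is_profile E own v X" "is_history E v h"
  shows "is_profile E own (last h) (restrict_prof X h)"
  unfolding is_profile_def is_strategy_def
proof (intro allI impI)
  fix i g assume g: "is_history E (last h) g \<and> own (last g) = i"
  have "is_history E v (butlast h @ g)" using is_history_continue[OF assms(2)] g by simp
  moreover have "last (butlast h @ g) = last g" using is_history_not_Nil[of E "last h" g] g by simp
  ultimately show "(last g, restrict_prof X h i g) \<in> E"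
    using assms(1) g unfolding is_profile_def is_strategy_def restrict_prof_def by metis
qed

section \<open>Prefix independence and subgames of \<open>\<epsilon>\<close>-SPEs\<close>

lemma prefix_independent_play_suffix:
  assumes "prefix_independent E \<mu>" "is_play E \<rho>"
  shows "\<mu> (play_suffix n \<rho>) = \<mu> \<rho>"
proof (cases n)
  case (Suc n')
  have "conc (play_prefix \<rho> n) (play_suffix n \<rho>) = \<rho>" by (rule ext) (simp add: conc_def)
  moreover have "is_play E (play_suffix n \<rho>)" using assms(2) by (simp add: is_play_def)
  moreover have "is_path E (play_prefix \<rho> n)" and "(last (play_prefix \<rho> n), play_suffix n \<rho> 0) \<in> E"
    using assms(2) Suc by (simp_all add: is_path_play_prefix is_play_def)
  ultimately show ?thesis using assms(1) unfolding prefix_independent_def by metis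
qed simp

lemma eps_SPE_iff:
  "eps_SPE E own \<mu> \<epsilon> v \<sigma> \<longleftrightarrow> is_profile E own v \<sigma> \<and>
    (\<forall>h i \<tau>. is_history E v h \<and> is_strategy E own v i \<tau> \<longrightarrow>
       \<mu> (play_from own (\<sigma>(i := \<tau>)) h) i \<le> \<mu> (play_from own \<sigma> h) i + \<epsilon>)"
proof -
  have "conc (butlast h) (outcome own (restrict_prof Y h) (last h)) = play_from own Y h"
    if "is_history E v h" for h Y
    using that conc_outcome_restrict_prof is_history_not_Nil by metis
  then show ?thesis unfolding eps_SPE_def
    by (intro conj_cong refl all_cong1 imp_cong) simp_all
qed

lemma is_strategy_lift:
  assumes prof: "is_profile E own v \<sigma>" and \<tau>': "is_strategy E own (last h) i \<tau>'"
  shows "is_strategy E own v i (\<lambda>g. if take L g = butlast h \<and> is_history E (last h) (drop L g)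
                                   then \<tau>' (drop L g) else \<sigma> i g)"
  unfolding is_strategy_def
proof (intro allI impI)
  fix g assume g: "is_history E v g \<and> own (last g) = i"
  show "(last g, if take L g = butlast h \<and> is_history E (last h) (drop L g)
                 then \<tau>' (drop L g) else \<sigma> i g) \<in> E"
  proof (cases "take L g = butlast h \<and> is_history E (last h) (drop L g)")
    case True
    then have "drop L g \<noteq> []" using is_history_not_Nil by metis
    then have "last (drop L g) = last g" by simp
    moreover have "(last (drop L g), \<tau>' (drop L g)) \<in> E"
      using True \<tau>' g \<open>last (drop L g) = last g\<close> unfolding is_strategy_def by metis
    ultimately show ?thesis using True by simp
  next
    case False
    have "(last g, \<sigma> i g) \<in> E" using prof g unfolding is_profile_def is_strategy_def by blast
    then show ?thesis using False by auto
  qed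
qed

text \<open>
A deviation in the subgame after \<open>h\<close> is lifted to the whole game with \<open>is_strategy_lift\<close>;
prefix independence then removes the common prefix \<open>butlast h\<close>.
\<close>

lemma eps_SPE_restrict_prof:
  assumes PI: "prefix_independent E \<mu>" and S: "eps_SPE E own \<mu> \<epsilon> v \<sigma>" and h: "is_history E v h"
  shows "eps_SPE E own \<mu> \<epsilon> (last h) (restrict_prof \<sigma> h)"
  unfolding eps_SPE_iff
proof (intro conjI allI impI)
  define L where "L = length h - 1"
  have hne: "h \<noteq> []" using h by (rule is_history_not_Nil)
  have prof: "is_profile E own v \<sigma>" using S unfolding eps_SPE_iff by blast
  show rprof: "is_profile E own (last h) (restrict_prof \<sigma> h)"
    by (rule is_profile_restrict_prof[OF prof h])
  fix g i \<tau>' assume "is_history E (last h) g \<and> is_strategy E own (last h) i \<tau>'"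
  then have g: "is_history E (last h) g" and \<tau>': "is_strategy E own (last h) i \<tau>'" by auto
  have gne: "g \<noteq> []" using g by (rule is_history_not_Nil)
  define H where "H = butlast h @ g"
  have H: "is_history E v H" unfolding H_def by (rule is_history_continue[OF h g])
  define \<tau> where "\<tau> = (\<lambda>g'. if take L g' = butlast h \<and> is_history E (last h) (drop L g')
                              then \<tau>' (drop L g') else \<sigma> i g')"
  have \<tau>: "is_strategy E own v i \<tau>" unfolding \<tau>_def by (rule is_strategy_lift[OF prof \<tau>'])
  have "\<mu> (play_from own (\<sigma>(i := \<tau>)) H) i \<le> \<mu> (play_from own \<sigma> H) i + \<epsilon>"
    using S H \<tau> unfolding eps_SPE_iff by blast
  moreover have subgame: "\<mu> (play_from own Y H) = \<mu> (play_from own (restrict_prof Y h) g)"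
    if "is_profile E own v Y" for Y
    using prefix_independent_play_suffix[OF PI is_play_play_from(1)[OF that H], of L]
      play_suffix_play_from[OF hne gne, of own Y] by (simp add: H_def L_def)
  moreover have "play_from own ((restrict_prof \<sigma> h)(i := \<tau>')) g = play_from own (restrict_prof (\<sigma>(i := \<tau>)) h) g"
  proof (rule play_from_cong[OF is_profile_fun_upd[OF rprof \<tau>'] g])
    fix j g' assume "is_history E (last h) g'"
    moreover have "take L (butlast h @ g') = butlast h" "drop L (butlast h @ g') = g'"
      by (simp_all add: L_def)
    ultimately show "((restrict_prof \<sigma> h)(i := \<tau>')) j g' = restrict_prof (\<sigma>(i := \<tau>)) h j g'"
      by (simp add: restrict_prof_def \<tau>_def)
  qed
  ultimately show "\<mu> (play_from own ((restrict_prof \<sigma> h)(i := \<tau>')) g) i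
                   \<le> \<mu> (play_from own (restrict_prof \<sigma> h) g) i + \<epsilon>"
    using subgame[OF prof] subgame[OF is_profile_fun_upd[OF prof \<tau>]] by simp
qed

section \<open>Outcomes of \<open>\<epsilon>\<close>-SPEs are \<open>\<lambda>\<^sup>*\<close>-consistent\<close>

definition spe_requirement ::
  "('v \<times> 'v) set \<Rightarrow> ('v \<Rightarrow> 'p) \<Rightarrow> ((nat \<Rightarrow> 'v) \<Rightarrow> 'p \<Rightarrow> real) \<Rightarrow> real \<Rightarrow> 'v \<Rightarrow> ereal" where
  "spe_requirement E own \<mu> \<epsilon> v =
     (INF \<sigma>\<in>{\<sigma>. eps_SPE E own \<mu> \<epsilon> v \<sigma>}. ereal (\<mu> (play_from own \<sigma> [v]) (own v)))"

lemma eps_SPE_is_profile: "eps_SPE E own \<mu> \<epsilon> v \<sigma> \<Longrightarrow> is_profile E own v \<sigma>"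
  unfolding eps_SPE_iff by blast

lemma consistent_spe_requirement:
  assumes PI: "prefix_independent E \<mu>" and S: "eps_SPE E own \<mu> \<epsilon> v \<sigma>"
  shows "consistent own \<mu> (spe_requirement E own \<mu> \<epsilon>) (play_from own \<sigma> [v])"
  unfolding consistent_def
proof (intro allI impI)
  fix i n
  define \<rho> where "\<rho> = play_from own \<sigma> [v]"
  define h where "h = play_prefix \<rho> (Suc n)"
  assume "own (play_from own \<sigma> [v] n) = i"
  then have i: "own (\<rho> n) = i" by (simp add: \<rho>_def)
  have h: "is_history E v h"
    unfolding h_def \<rho>_def by (rule is_history_play_prefix_play_from[OF eps_SPE_is_profile[OF S] is_history_singleton])
  have "play_suffix n \<rho> = play_from own (restrict_prof \<sigma> h) [\<rho> n]"
    using play_suffix_play_from[of h "[last h]" own \<sigma>] play_from_play_prefix[of "[v]" "Suc n" own \<sigma>]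
    by (simp add: h_def \<rho>_def play_prefix_Suc)
  moreover have "eps_SPE E own \<mu> \<epsilon> (\<rho> n) (restrict_prof \<sigma> h)"
    using eps_SPE_restrict_prof[OF PI S h] by (simp add: h_def)
  then have "spe_requirement E own \<mu> \<epsilon> (\<rho> n)
             \<le> ereal (\<mu> (play_from own (restrict_prof \<sigma> h) [\<rho> n]) (own (\<rho> n)))"
    unfolding spe_requirement_def by (intro INF_lower) simp
  ultimately show "spe_requirement E own \<mu> \<epsilon> (play_from own \<sigma> [v] n)
                   \<le> ereal (\<mu> (\<lambda>k. play_from own \<sigma> [v] (n + k)) i)"
    using i by (simp add: \<rho>_def play_suffix_def)
qed

lemma eps_SPE_in_lamRat:
  assumes PI: "prefix_independent E \<mu>" and S: "eps_SPE E own \<mu> \<epsilon> v \<sigma>"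
  shows "\<sigma> \<in> lamRat E own \<mu> (spe_requirement E own \<mu> \<epsilon>) i v"
  unfolding lamRat_def
proof (intro CollectI conjI exI allI impI)
  have prof: "is_profile E own v \<sigma>" using S by (rule eps_SPE_is_profile)
  then show "is_profile_except E own v i \<sigma>" "is_strategy E own v i (\<sigma> i)"
    by (simp_all add: is_profile_def is_profile_except_def)
  fix h assume "is_history E v h \<and> compatible_except own i \<sigma> h"
  then have "eps_SPE E own \<mu> \<epsilon> (last h) (restrict_prof \<sigma> h)"
    using eps_SPE_restrict_prof[OF PI S] by blast
  then show "consistent own \<mu> (spe_requirement E own \<mu> \<epsilon>)
               (outcome own (restrict_prof (\<sigma>(i := \<sigma> i)) h) (last h))"
    using consistent_spe_requirement[OF PI] by (simp add: outcome_eq_play_from)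
qed

lemma nego_spe_requirement_le:
  assumes PI: "prefix_independent E \<mu>"
  shows "nego E own \<mu> (spe_requirement E own \<mu> \<epsilon>) v - ereal \<epsilon> \<le> spe_requirement E own \<mu> \<epsilon> v"
  unfolding spe_requirement_def[of E own \<mu> \<epsilon> v]
proof (rule INF_greatest)
  fix \<sigma> assume "\<sigma> \<in> {\<sigma>. eps_SPE E own \<mu> \<epsilon> v \<sigma>}"
  then have S: "eps_SPE E own \<mu> \<epsilon> v \<sigma>" by simp
  have "\<sigma> \<in> lamRat E own \<mu> (spe_requirement E own \<mu> \<epsilon>) (own v) v"
    by (rule eps_SPE_in_lamRat[OF PI S])
  then have "nego E own \<mu> (spe_requirement E own \<mu> \<epsilon>) v \<le> best_response_value E own \<mu> (own v) v \<sigma>"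
    unfolding nego_def by (rule INF_lower)
  also have "\<dots> \<le> ereal (\<mu> (play_from own \<sigma> [v]) (own v) + \<epsilon>)"
    unfolding best_response_value_def
  proof (rule SUP_least)
    fix \<tau> assume "\<tau> \<in> {\<tau>. is_strategy E own v (own v) \<tau>}"
    then have "\<mu> (play_from own (\<sigma>(own v := \<tau>)) [v]) (own v) \<le> \<mu> (play_from own \<sigma> [v]) (own v) + \<epsilon>"
      using S[unfolded eps_SPE_iff] is_history_singleton[of E v] by simp
    then show "ereal (\<mu> (outcome own (\<sigma>(own v := \<tau>)) v) (own v)) \<le> ereal (\<mu> (play_from own \<sigma> [v]) (own v) + \<epsilon>)"
      by (simp add: outcome_eq_play_from)
  qed
  finally show "nego E own \<mu> (spe_requirement E own \<mu> \<epsilon>) v - ereal \<epsilon> \<le> ereal (\<mu> (play_from own \<sigma> [v]) (own v))"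
    by (cases "nego E own \<mu> (spe_requirement E own \<mu> \<epsilon>) v") auto
qed

lemma consistent_antimono: "lam \<le> lam' \<Longrightarrow> consistent own \<mu> lam' \<rho> \<Longrightarrow> consistent own \<mu> lam \<rho>"
  unfolding consistent_def le_fun_def by (metis order_trans)

lemma consistent_play_suffix:
  assumes "consistent own \<mu> lam \<rho>"
  shows "consistent own \<mu> lam (play_suffix n \<rho>)"
  unfolding consistent_def
proof (intro allI impI)
  fix i m
  have "lam (\<rho> (n + m)) \<le> ereal (\<mu> (\<lambda>k. \<rho> (n + m + k)) (own (\<rho> (n + m))))"
    using assms unfolding consistent_def by blast
  then show "own (play_suffix n \<rho> m) = i \<Longrightarrow>
             lam (play_suffix n \<rho> m) \<le> ereal (\<mu> (\<lambda>k. play_suffix n \<rho> (m + k)) i)"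
    by (simp add: add.assoc)
qed

lemma nego_mono: "lam \<le> lam' \<Longrightarrow> nego E own \<mu> lam v \<le> nego E own \<mu> lam' v"
  unfolding nego_def
proof (rule INF_superset_mono)
  assume "lam \<le> lam'"
  then show "lamRat E own \<mu> lam' (own v) v \<subseteq> lamRat E own \<mu> lam (own v) v"
    unfolding lamRat_def using consistent_antimono by blast
qed simp

text \<open>The least fixed point of the monotone map \<open>\<lambda> \<mapsto> nego(\<lambda>) - \<epsilon>\<close> is an \<open>\<epsilon>\<close>-fixed point.\<close>

lemma least_eps_fixed_point_le:
  assumes least: "least_eps_fixed_point E own \<mu> \<epsilon> lam" and "\<epsilon> \<ge> 0"
    and below: "\<And>v. nego E own \<mu> l v - ereal \<epsilon> \<le> l v"
  shows "lam \<le> l"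
proof -
  define f where "f l' v = nego E own \<mu> l' v - ereal \<epsilon>" for l' v
  have "mono f" unfolding f_def
    by (intro monoI le_funI) (simp add: nego_mono ereal_minus_mono)
  then have L: "lfp f = f (lfp f)" by (rule lfp_unfold)
  have "eps_fixed_point E own \<mu> \<epsilon> (lfp f)"
    unfolding eps_fixed_point_def
  proof
    fix v
    have "lfp f v = nego E own \<mu> (lfp f) v - ereal \<epsilon>" using fun_cong[OF L, of v] by (simp add: f_def)
    then show "lfp f v - ereal \<epsilon> \<le> nego E own \<mu> (lfp f) v \<and> nego E own \<mu> (lfp f) v \<le> lfp f v + ereal \<epsilon>"
      using \<open>\<epsilon> \<ge> 0\<close> by (cases "nego E own \<mu> (lfp f) v") auto
  qed
  then have "lam \<le> lfp f" using least unfolding least_eps_fixed_point_def by blast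
  also have "lfp f \<le> l" by (rule lfp_lowerbound) (use below in \<open>simp add: f_def le_fun_def\<close>)
  finally show ?thesis .
qed

theorem eps_SPE_outcome_consistent:
  assumes PI: "prefix_independent E \<mu>" and "least_eps_fixed_point E own \<mu> \<epsilon> lam" and "\<epsilon> \<ge> 0"
    and S: "eps_SPE E own \<mu> \<epsilon> v \<sigma>"
  shows "consistent own \<mu> lam (outcome own \<sigma> v)"
proof -
  have "lam \<le> spe_requirement E own \<mu> \<epsilon>"
    using least_eps_fixed_point_le assms(2,3) nego_spe_requirement_le[OF PI] by blast
  then show ?thesis
    using consistent_antimono consistent_spe_requirement[OF PI S] by (simp add: outcome_eq_play_from)
qed

lemma compatible_except_snoc:
  assumes "compatible_except own i \<pi> h" "h \<noteq> []" "own (last h) = i \<or> w = \<pi> (own (last h)) h"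
  shows "compatible_except own i \<pi> (h @ [w])"
  unfolding compatible_except_def
proof (intro allI impI)
  fix k assume k: "Suc k < length (h @ [w]) \<and> own ((h @ [w]) ! k) \<noteq> i"
  show "(h @ [w]) ! Suc k = \<pi> (own ((h @ [w]) ! k)) (take (Suc k) (h @ [w]))"
  proof (cases "Suc k < length h")
    case True
    then show ?thesis using assms(1) k unfolding compatible_except_def by (simp add: nth_append)
  next
    case False
    then have "k = length h - 1" "Suc k = length h" using k assms(2) by auto
    moreover from this have "(h @ [w]) ! k = last h" using assms(2) by (simp add: nth_append last_conv_nth)
    ultimately show ?thesis using k assms(3) by simp
  qed
qed

lemma compatible_except_play_prefix:
  "compatible_except own i \<pi> (play_prefix \<rho> n) \<longleftrightarrow>
   (\<forall>m. Suc m < n \<and> own (\<rho> m) \<noteq> i \<longrightarrow> \<rho> (Suc m) = \<pi> (own (\<rho> m)) (play_prefix \<rho> (Suc m)))"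
  by (auto simp: compatible_except_def take_play_prefix)

lemma first_deviation:
  assumes hne: "h \<noteq> []" and ne: "play_from own (X(i := \<tau>)) h \<noteq> play_from own X h"
  obtains p where "length h \<le> Suc p"
    and "play_prefix (play_from own (X(i := \<tau>)) h) (Suc p) = play_prefix (play_from own X h) (Suc p)"
    and "own (play_from own X h p) = i"
    and "play_from own (X(i := \<tau>)) h (Suc p) \<noteq> play_from own X h (Suc p)"
proof -
  define \<rho> where "\<rho> = play_from own (X(i := \<tau>)) h"
  define \<pi> where "\<pi> = play_from own X h"
  define p\<^sub>0 where "p\<^sub>0 = (LEAST m. \<rho> m \<noteq> \<pi> m)"
  have "\<exists>m. \<rho> m \<noteq> \<pi> m" using ne by (auto simp: \<rho>_def \<pi>_def)
  then have p\<^sub>0: "\<rho> p\<^sub>0 \<noteq> \<pi> p\<^sub>0" unfolding p\<^sub>0_def by (rule LeastI_ex)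
  have before: "\<rho> m = \<pi> m" if "m < p\<^sub>0" for m
    using not_less_Least[OF that[unfolded p\<^sub>0_def]] by blast
  have "\<not> p\<^sub>0 < length h" using p\<^sub>0 by (auto simp: \<rho>_def \<pi>_def play_from_nth)
  then obtain p where p: "p\<^sub>0 = Suc p" "length h \<le> Suc p" using hne by (cases p\<^sub>0) auto
  have prefix: "play_prefix \<rho> (Suc p) = play_prefix \<pi> (Suc p)"
    using before p by (simp add: play_prefix_eq_iff)
  have "own (\<pi> p) = i"
  proof (rule ccontr)
    assume "own (\<pi> p) \<noteq> i"
    moreover have "\<rho> p = \<pi> p" using before p by simp
    ultimately have "\<rho> (Suc p) = \<pi> (Suc p)"
      using play_from_Suc[OF hne p(2), of own "X(i := \<tau>)"] play_from_Suc[OF hne p(2), of own X] prefix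
      by (simp add: \<rho>_def \<pi>_def)
    then show False using p\<^sub>0 p by simp
  qed
  then show thesis using that p p\<^sub>0 prefix by (simp add: \<rho>_def \<pi>_def)
qed

lemma compatible_play_is_deviation:
  assumes \<pi>: "is_profile E own u \<pi>" and Z: "is_play E Z" "Z 0 = u"
    and compatible: "\<And>m. own (Z m) \<noteq> i \<Longrightarrow> Z (Suc m) = \<pi> (own (Z m)) (play_prefix Z (Suc m))"
  obtains \<tau> where "is_strategy E own u i \<tau>" and "play_from own (\<pi>(i := \<tau>)) [u] = Z"
proof
  define \<tau> where "\<tau> h = (if h = play_prefix Z (length h) then Z (length h) else \<pi> i h)" for h
  show "is_strategy E own u i \<tau>"
    unfolding is_strategy_def
  proof (intro allI impI)
    fix h assume h: "is_history E u h \<and> own (last h) = i"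
    show "(last h, \<tau> h) \<in> E"
    proof (cases "h = play_prefix Z (length h)")
      case True
      moreover obtain l where l: "length h = Suc l"
        using h is_history_not_Nil[of E u h] by (cases h) auto
      ultimately have "last h = Z l" by (metis last_play_prefix)
      then show ?thesis using True l Z(1) by (simp add: \<tau>_def is_play_def)
    next
      case False
      then show ?thesis using \<pi> h unfolding is_profile_def is_strategy_def \<tau>_def by auto
    qed
  qed
  show "play_from own (\<pi>(i := \<tau>)) [u] = Z"
  proof (rule play_from_eqI)
    show "generates own (\<pi>(i := \<tau>)) [u] Z"
      unfolding generates_def
    proof (intro conjI allI impI)
      show "play_prefix Z (length [u]) = [u]" by (simp add: play_prefix_def Z(2))
      fix m
      show "Z (Suc m) = (\<pi>(i := \<tau>)) (own (Z m)) (play_prefix Z (Suc m))"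
        using compatible[of m] by (cases "own (Z m) = i") (simp_all add: \<tau>_def)
    qed
  qed simp
qed

lemma eventually_const_by_finite_descent:
  fixes V :: "nat \<Rightarrow> 'a::linorder"
  assumes fin: "finite (V ` {N..})"
    and descent: "\<And>n. N \<le> n \<Longrightarrow> V (Suc n) \<le> V n \<and> (V (Suc n) = V n \<longrightarrow> K (Suc n) = K n)"
  shows "\<exists>M\<ge>N. \<forall>n\<ge>M. K n = K M"
proof -
  obtain M where M: "N \<le> M" "V M = Min (V ` {N..})"
    using Min_in[OF fin] by auto
  have V: "V n = V M" if "M \<le> n" for n
    using that
  proof (induction n rule: dec_induct)
    case (step n)
    have "Min (V ` {N..}) \<le> V (Suc n)" using fin step.hyps M(1) by simp
    moreover have "V (Suc n) \<le> V n" using descent step.hyps M(1) by simp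
    ultimately show ?case using step.IH M(2) by simp
  qed simp
  have "K n = K M" if "M \<le> n" for n
    using that
  proof (induction n rule: dec_induct)
    case (step n)
    then show ?case using descent[of n] V[of n] V[of "Suc n"] M(1) by simp
  qed simp
  then show ?thesis using M(1) by blast
qed

section \<open>An \<open>\<epsilon>\<close>-SPE realising a \<open>\<lambda>\<^sup>*\<close>-consistent play\<close>

locale spe_construction =
  fixes E :: "('v::finite \<times> 'v) set" and own :: "'v \<Rightarrow> 'p" and \<mu> :: "(nat \<Rightarrow> 'v) \<Rightarrow> 'p \<Rightarrow> real"
    and \<epsilon> :: real and lam :: "'v \<Rightarrow> ereal" and \<xi> :: "nat \<Rightarrow> 'v" and v0 :: 'v
  assumes prefix_independent: "prefix_independent E \<mu>"
    and fixed_point: "eps_fixed_point E own \<mu> \<epsilon> lam"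
    and steady: "steady_negotiation E own \<mu>"
    and \<xi>_play: "is_play E \<xi>" and \<xi>_0: "\<xi> 0 = v0" and \<xi>_consistent: "consistent own \<mu> lam \<xi>"
    and \<epsilon>_nonneg: "\<epsilon> \<ge> 0"
begin

definition punishing :: "'v \<Rightarrow> ('p \<Rightarrow> 'v list \<Rightarrow> 'v) \<Rightarrow> bool" where
  "punishing u \<pi> \<longleftrightarrow> is_profile E own u \<pi> \<and>
     (\<forall>h. is_history E u h \<and> compatible_except own (own u) \<pi> h \<longrightarrow>
        consistent own \<mu> lam (play_suffix (length h - 1) (play_from own \<pi> h))) \<and>
     (\<forall>\<tau>. is_strategy E own u (own u) \<tau> \<longrightarrow>
        ereal (\<mu> (play_from own (\<pi>(own u := \<tau>)) [u]) (own u)) \<le> lam u + ereal \<epsilon>)"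

definition punishment :: "'v \<Rightarrow> 'p \<Rightarrow> 'v list \<Rightarrow> 'v" where
  "punishment u = (SOME \<pi>. punishing u \<pi>)"

text \<open>
Steady negotiation turns the infimum \<open>nego(\<lambda>)(u) \<le> \<lambda>(u) + \<epsilon> < \<infinity>\<close> into a minimum, attained by
a \<open>\<lambda>\<close>-rational environment.
\<close>

lemma lamRat_minimizer:
  assumes "lam u < \<infinity>"
  obtains \<pi>\<^sub>0 where "\<pi>\<^sub>0 \<in> lamRat E own \<mu> lam (own u) u"
    and "best_response_value E own \<mu> (own u) u \<pi>\<^sub>0 \<le> lam u + ereal \<epsilon>"
proof -
  define S where "S = best_response_value E own \<mu> (own u) u ` lamRat E own \<mu> lam (own u) u"
  have nego: "nego E own \<mu> lam u \<le> lam u + ereal \<epsilon>"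
    using fixed_point unfolding eps_fixed_point_def by blast
  moreover have S: "nego E own \<mu> lam u = Inf S" unfolding nego_def S_def by simp
  ultimately have "S \<noteq> {}" using assms by (cases "lam u") (auto simp: top_ereal_def)
  then obtain m where "m \<in> S" and m_min: "\<forall>x\<in>S. m \<le> x"
    using steady unfolding steady_negotiation_def S_def Let_def by blast
  then obtain \<pi>\<^sub>0 where \<pi>\<^sub>0: "\<pi>\<^sub>0 \<in> lamRat E own \<mu> lam (own u) u"
    and m: "m = best_response_value E own \<mu> (own u) u \<pi>\<^sub>0"
    unfolding S_def by blast
  have "m \<le> Inf S" using m_min by (simp add: Inf_greatest)
  then have "best_response_value E own \<mu> (own u) u \<pi>\<^sub>0 \<le> lam u + ereal \<epsilon>" using nego S m by simp
  then show thesis using that \<pi>\<^sub>0 by blast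
qed

lemma punishing_exists:
  assumes "lam u < \<infinity>"
  shows "\<exists>\<pi>. punishing u \<pi>"
proof -
  define i where "i = own u"
  obtain \<pi>\<^sub>0 where "\<pi>\<^sub>0 \<in> lamRat E own \<mu> lam i u"
    and best_value: "best_response_value E own \<mu> i u \<pi>\<^sub>0 \<le> lam u + ereal \<epsilon>"
    using lamRat_minimizer[OF assms] unfolding i_def by blast
  then obtain \<tau> where except: "is_profile_except E own u i \<pi>\<^sub>0" and \<tau>: "is_strategy E own u i \<tau>"
    and cons: "\<forall>h. is_history E u h \<and> compatible_except own i \<pi>\<^sub>0 h \<longrightarrow>
              consistent own \<mu> lam (outcome own (restrict_prof (\<pi>\<^sub>0(i := \<tau>)) h) (last h))"
    unfolding lamRat_def by blast
  have "punishing u (\<pi>\<^sub>0(i := \<tau>))" unfolding punishing_def i_def[symmetric]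
  proof (intro conjI allI impI)
    show "is_profile E own u (\<pi>\<^sub>0(i := \<tau>))"
      using except \<tau> unfolding is_profile_def is_profile_except_def by simp
  next
    fix h assume h: "is_history E u h \<and> compatible_except own i (\<pi>\<^sub>0(i := \<tau>)) h"
    then have "compatible_except own i \<pi>\<^sub>0 h" unfolding compatible_except_def by auto
    then show "consistent own \<mu> lam (play_suffix (length h - 1) (play_from own (\<pi>\<^sub>0(i := \<tau>)) h))"
      using cons h is_history_not_Nil outcome_restrict_prof by metis
  next
    fix \<tau>' assume "is_strategy E own u i \<tau>'"
    then have "ereal (\<mu> (outcome own (\<pi>\<^sub>0(i := \<tau>')) u) i) \<le> best_response_value E own \<mu> i u \<pi>\<^sub>0"
      unfolding best_response_value_def by (intro SUP_upper) simp
    then show "ereal (\<mu> (play_from own ((\<pi>\<^sub>0(i := \<tau>))(i := \<tau>')) [u]) i) \<le> lam u + ereal \<epsilon>"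
      using best_value by (simp add: outcome_eq_play_from)
  qed
  then show ?thesis by blast
qed

lemma punishing_punishment: "lam u < \<infinity> \<Longrightarrow> punishing u (punishment u)"
  unfolding punishment_def using punishing_exists someI_ex by metis

text \<open>
The mode of a history is \<open>None\<close> while it is a prefix of \<open>\<xi>\<close>, and \<open>Some k\<close> when the punishment
of the vertex at position \<open>k\<close> is being played.  After a deviation from the planned move the
punishment is restarted at the deviation, unless the deviator is the punished player and the
requirement at the deviation is not lower.
\<close>

definition planned_move :: "'v list \<Rightarrow> nat option \<Rightarrow> 'v" where
  "planned_move g m = (case m of
      None \<Rightarrow> \<xi> (length g)
    | Some k \<Rightarrow> punishment (g ! k) (own (last g)) (drop k g))"

definition next_mode :: "'v list \<Rightarrow> 'v \<Rightarrow> nat option \<Rightarrow> nat option" where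
  "next_mode g w m =
     (if w = planned_move g m then m
      else case m of
        None \<Rightarrow> Some (length g - 1)
      | Some k \<Rightarrow> if own (g ! k) = own (last g) \<and> lam (g ! k) \<le> lam (last g) then Some k
                  else Some (length g - 1))"

fun mode_rev :: "'v list \<Rightarrow> nat option" where
  "mode_rev [] = None"
| "mode_rev [v] = None"
| "mode_rev (w # v # r) = next_mode (rev (v # r)) w (mode_rev (v # r))"

definition mode :: "'v list \<Rightarrow> nat option" where
  "mode g = mode_rev (rev g)"

lemma mode_singleton [simp]: "mode [v] = None"
  by (simp add: mode_def)

lemma mode_snoc: "g \<noteq> [] \<Longrightarrow> mode (g @ [w]) = next_mode g w (mode g)"
  by (cases "rev g") (auto simp: mode_def dest: arg_cong[of _ _ rev])

text \<open>All players use the same move function; only its value for the owner of the last vertex matters.\<close>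

definition spe_profile :: "'p \<Rightarrow> 'v list \<Rightarrow> 'v" where
  "spe_profile j g = planned_move g (mode g)"

definition mode_invariant :: "'v list \<Rightarrow> bool" where
  "mode_invariant g \<longleftrightarrow> (case mode g of
      None \<Rightarrow> g = play_prefix \<xi> (length g)
    | Some k \<Rightarrow> k < length g \<and> lam (g ! k) < \<infinity> \<and> is_history E (g ! k) (drop k g) \<and>
                compatible_except own (own (g ! k)) (punishment (g ! k)) (drop k g))"

lemma mode_invariant_Some:
  assumes "mode_invariant g" "mode g = Some k"
  shows "k < length g" "lam (g ! k) < \<infinity>" "is_history E (g ! k) (drop k g)"
    and "compatible_except own (own (g ! k)) (punishment (g ! k)) (drop k g)"
  using assms unfolding mode_invariant_def by auto

lemma planned_move_edge:
  assumes h: "is_history E v0 g" and inv: "mode_invariant g"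
  shows "(last g, planned_move g (mode g)) \<in> E"
proof (cases "mode g")
  case None
  then have g: "g = play_prefix \<xi> (length g)" using inv unfolding mode_invariant_def by simp
  obtain n where n: "length g = Suc n" using is_history_not_Nil[OF h] by (cases g) auto
  then have "last g = \<xi> n" using g by (metis last_play_prefix)
  then show ?thesis using None n \<xi>_play unfolding planned_move_def is_play_def by simp
next
  case (Some k)
  define u where "u = g ! k"
  note k = mode_invariant_Some[OF inv Some, folded u_def]
  have "drop k g \<noteq> []" using k by simp
  then have "last (drop k g) = last g" by simp
  moreover have "(last (drop k g), punishment u (own (last (drop k g))) (drop k g)) \<in> E"
    using punishing_punishment[OF k(2)] k(3) unfolding punishing_def is_profile_def is_strategy_def by blast
  ultimately show ?thesis using Some unfolding planned_move_def u_def by simp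
qed

lemma mode_play_from_spe_profile:
  assumes g: "g \<noteq> []" and n: "length g \<le> n"
  shows "mode (play_prefix (play_from own spe_profile g) n) = mode g"
  using n
proof (induction n)
  case (Suc n)
  define \<rho> where "\<rho> = play_from own spe_profile g"
  have gen: "generates own spe_profile g \<rho>" unfolding \<rho>_def by (rule generates_play_from[OF g])
  show ?case
  proof (cases "length g = Suc n")
    case True
    then show ?thesis using gen unfolding generates_def \<rho>_def by metis
  next
    case False
    then have len: "length g \<le> n" using Suc.prems by simp
    then obtain n' where n': "n = Suc n'" using g by (cases n) auto
    have "\<rho> n = planned_move (play_prefix \<rho> n) (mode (play_prefix \<rho> n))"
      using gen len n' unfolding generates_def spe_profile_def by simp
    then have "mode (play_prefix \<rho> (Suc n)) = mode (play_prefix \<rho> n)"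
      using mode_snoc[of "play_prefix \<rho> n" "\<rho> n"] n' by (simp add: play_prefix_Suc next_mode_def)
    then show ?thesis using Suc.IH len by (simp add: \<rho>_def)
  qed
qed (use g in simp)

lemma play_from_spe_profile_None:
  assumes g: "g \<noteq> []" and inv: "mode_invariant g" and None: "mode g = None"
  shows "play_from own spe_profile g = \<xi>"
proof
  define \<rho> where "\<rho> = play_from own spe_profile g"
  have gen: "generates own spe_profile g \<rho>" unfolding \<rho>_def by (rule generates_play_from[OF g])
  have g_prefix: "g = play_prefix \<xi> (length g)" using inv None unfolding mode_invariant_def by simp
  fix m show "play_from own spe_profile g m = \<xi> m" unfolding \<rho>_def[symmetric]
  proof (induction m rule: less_induct)
    case (less m)
    show ?case
    proof (cases "m < length g")
      case True
      then show ?thesis using gen g_prefix unfolding generates_def by (metis nth_play_prefix)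
    next
      case False
      then obtain m' where m': "m = Suc m'" "length g \<le> Suc m'" using g by (cases m) auto
      have "play_prefix \<rho> (Suc m') = play_prefix \<xi> (Suc m')"
        using less m' by (simp add: play_prefix_eq_iff)
      moreover have "mode (play_prefix \<rho> (Suc m')) = None"
        using mode_play_from_spe_profile[OF g m'(2)] None by (simp add: \<rho>_def)
      moreover have "\<rho> (Suc m') = planned_move (play_prefix \<rho> (Suc m')) (mode (play_prefix \<rho> (Suc m')))"
        using gen m' unfolding generates_def spe_profile_def by simp
      ultimately show ?thesis using m' by (simp add: planned_move_def)
    qed
  qed
qed

lemma play_suffix_play_from_spe_profile:
  assumes g: "g \<noteq> []" and inv: "mode_invariant g" and Some: "mode g = Some k"
  shows "play_suffix k (play_from own spe_profile g) = play_from own (punishment (g ! k)) (drop k g)"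
proof -
  define \<rho> where "\<rho> = play_from own spe_profile g"
  have gen: "generates own spe_profile g \<rho>" unfolding \<rho>_def by (rule generates_play_from[OF g])
  have k: "k < length g" using mode_invariant_Some[OF inv Some] by simp
  have prefix: "play_prefix \<rho> (length g) = g" using gen unfolding generates_def by blast
  show ?thesis unfolding \<rho>_def[symmetric]
  proof (rule sym, rule play_from_eqI)
    show "drop k g \<noteq> []" using k by simp
    show "generates own (punishment (g ! k)) (drop k g) (play_suffix k \<rho>)"
      unfolding generates_def
    proof (intro conjI allI impI)
      show "play_prefix (play_suffix k \<rho>) (length (drop k g)) = drop k g"
        using prefix k by (simp add: play_prefix_play_suffix)
    next
      fix m assume m: "length (drop k g) \<le> Suc m"
      then have len: "length g \<le> Suc (k + m)" using k by simp
      then have "mode (play_prefix \<rho> (Suc (k + m))) = Some k"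
        using mode_play_from_spe_profile[OF g] Some by (simp add: \<rho>_def)
      moreover have "\<rho> (Suc (k + m)) = spe_profile (own (\<rho> (k + m))) (play_prefix \<rho> (Suc (k + m)))"
        using gen len unfolding generates_def by blast
      moreover have "\<rho> k = g ! k" using prefix k by (metis nth_play_prefix)
      ultimately show "play_suffix k \<rho> (Suc m)
          = punishment (g ! k) (own (play_suffix k \<rho> m)) (play_prefix (play_suffix k \<rho>) (Suc m))"
        using k by (simp add: spe_profile_def planned_move_def play_prefix_play_suffix)
    qed
  qed
qed

lemma consistent_play_from_spe_profile:
  assumes g: "g \<noteq> []" and inv: "mode_invariant g"
  shows "consistent own \<mu> lam (play_suffix (length g - 1) (play_from own spe_profile g))"
proof (cases "mode g")
  case None
  then show ?thesis using play_from_spe_profile_None[OF g inv] \<xi>_consistent consistent_play_suffix by metis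
next
  case (Some k)
  define u where "u = g ! k"
  note k = mode_invariant_Some[OF inv Some, folded u_def]
  have "consistent own \<mu> lam (play_suffix (length (drop k g) - 1) (play_from own (punishment u) (drop k g)))"
    using punishing_punishment[OF k(2)] k(3,4) unfolding punishing_def by blast
  also have "play_from own (punishment u) (drop k g) = play_suffix k (play_from own spe_profile g)"
    using play_suffix_play_from_spe_profile[OF g inv Some] by (simp add: u_def)
  also have "play_suffix (length (drop k g) - 1) (play_suffix k (play_from own spe_profile g))
             = play_suffix (length g - 1) (play_from own spe_profile g)"
    using k(1) by simp
  finally show ?thesis .
qed

lemma lam_last_finite:
  assumes g: "g \<noteq> []" and inv: "mode_invariant g"
  shows "lam (last g) < \<infinity>"
proof -
  define \<rho> where "\<rho> = play_suffix (length g - 1) (play_from own spe_profile g)"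
  have "\<rho> 0 = last g" using g by (simp add: \<rho>_def play_from_nth last_conv_nth)
  moreover have "lam (\<rho> 0) \<le> ereal (\<mu> (\<lambda>k. \<rho> (0 + k)) (own (\<rho> 0)))"
    using consistent_play_from_spe_profile[OF g inv] unfolding consistent_def \<rho>_def by blast
  ultimately have "lam (last g) \<le> ereal (\<mu> (\<lambda>k. \<rho> (0 + k)) (own (\<rho> 0)))" by simp
  also have "\<dots> < \<infinity>" by simp
  finally show ?thesis .
qed

lemma mode_invariant_restart:
  assumes g: "g \<noteq> []" and inv: "mode_invariant g" and edge: "(last g, w) \<in> E"
    and mode: "mode (g @ [w]) = Some (length g - 1)"
  shows "mode_invariant (g @ [w])"
proof -
  define k where "k = length g - 1"
  have k: "k < length g" using g by (simp add: k_def)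
  have "(g @ [w]) ! k = last g" using g by (simp add: k_def nth_append last_conv_nth)
  moreover have "drop k (g @ [w]) = [last g, w]"
  proof -
    have "drop (length (butlast g)) (butlast g @ [last g]) = [last g]" by simp
    then show ?thesis using g k by (simp add: k_def)
  qed
  moreover have "is_history E (last g) [last g, w]" using edge by (simp add: is_history_def is_path_def)
  moreover have "compatible_except own (own (last g)) \<pi> [last g, w]" for \<pi>
    unfolding compatible_except_def by (auto simp: less_Suc_eq)
  ultimately show ?thesis
    unfolding mode_invariant_def using mode k lam_last_finite[OF g inv] by (simp add: k_def)
qed

lemma mode_invariant_keep:
  assumes g: "g \<noteq> []" and inv: "mode_invariant g" and edge: "(last g, w) \<in> E"
    and Some: "mode g = Some k" and mode: "mode (g @ [w]) = Some k"
    and punished: "own (g ! k) = own (last g) \<or> w = punishment (g ! k) (own (last g)) (drop k g)"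
  shows "mode_invariant (g @ [w])"
proof -
  note k = mode_invariant_Some[OF inv Some]
  have drop_ne: "drop k g \<noteq> []" using k by simp
  then have last_drop: "last (drop k g) = last g" by simp
  have "is_history E (g ! k) (drop k g @ [w])"
    using k(3) is_path_snoc[OF drop_ne, of E w] edge last_drop drop_ne by (simp add: is_history_def)
  moreover have "compatible_except own (own (g ! k)) (punishment (g ! k)) (drop k g @ [w])"
    by (rule compatible_except_snoc[OF k(4) drop_ne]) (use punished last_drop in auto)
  ultimately show ?thesis
    unfolding mode_invariant_def using mode k by (simp add: nth_append)
qed

lemma mode_invariant_snoc:
  assumes g: "g \<noteq> []" and inv: "mode_invariant g" and edge: "(last g, w) \<in> E"
  shows "mode_invariant (g @ [w])"
proof (cases "w = planned_move g (mode g)")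
  case True
  then have mode: "mode (g @ [w]) = mode g" using mode_snoc[OF g] by (simp add: next_mode_def)
  show ?thesis
  proof (cases "mode g")
    case None
    then have "g = play_prefix \<xi> (length g)" and "w = \<xi> (length g)"
      using inv True unfolding mode_invariant_def planned_move_def by simp_all
    then have "g @ [w] = play_prefix \<xi> (length (g @ [w]))" by (simp add: play_prefix_Suc)
    then show ?thesis using mode None unfolding mode_invariant_def by simp
  next
    case (Some k)
    then show ?thesis
      using mode_invariant_keep[OF g inv edge Some] mode True by (simp add: planned_move_def)
  qed
next
  case False
  have mode: "mode (g @ [w]) = next_mode g w (mode g)" by (rule mode_snoc[OF g])
  show ?thesis
  proof (cases "mode g")
    case None
    then have "mode (g @ [w]) = Some (length g - 1)" using mode False by (simp add: next_mode_def)
    then show ?thesis by (rule mode_invariant_restart[OF g inv edge])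
  next
    case (Some k)
    show ?thesis
    proof (cases "own (g ! k) = own (last g) \<and> lam (g ! k) \<le> lam (last g)")
      case True
      then show ?thesis
        using mode False Some by (intro mode_invariant_keep[OF g inv edge Some]) (simp_all add: next_mode_def)
    next
      case not_kept: False
      then have "mode (g @ [w]) = Some (length g - 1)" using mode False Some by (auto simp: next_mode_def)
      then show ?thesis by (rule mode_invariant_restart[OF g inv edge])
    qed
  qed
qed

lemma mode_invariant_history: "is_history E v0 g \<Longrightarrow> mode_invariant g"
proof (induction g rule: rev_induct)
  case (snoc w g)
  show ?case
  proof (cases "g = []")
    case True
    then show ?thesis using snoc.prems \<xi>_0 by (simp add: is_history_def mode_invariant_def play_prefix_def)
  next
    case False
    then have "is_path E g" "(last g, w) \<in> E"
      using is_path_snoc[OF False, of E w] snoc.prems by (simp_all add: is_history_def)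
    moreover from this have "is_history E v0 g" using snoc.prems False by (simp add: is_history_def)
    ultimately show ?thesis using snoc.IH mode_invariant_snoc[OF False] by blast
  qed
qed (simp add: is_history_def is_path_def)

lemma is_profile_spe_profile: "is_profile E own v0 spe_profile"
  unfolding is_profile_def is_strategy_def spe_profile_def
  using planned_move_edge mode_invariant_history by blast

lemma outcome_spe_profile: "outcome own spe_profile v0 = \<xi>"
  using play_from_spe_profile_None[of "[v0]"] \<xi>_0
  by (simp add: outcome_eq_play_from mode_invariant_def play_prefix_def)

lemma next_mode_deviation:
  assumes g: "g \<noteq> []" and dev: "w \<noteq> planned_move g m" "own (last g) = i"
    and m: "\<And>k. m = Some k \<Longrightarrow> k < length g"
  obtains k where "k < length g" "next_mode g w m = Some k" "own (g ! k) = i" "lam (g ! k) \<le> lam (last g)"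
proof (cases "\<exists>k. m = Some k \<and> own (g ! k) = own (last g) \<and> lam (g ! k) \<le> lam (last g)")
  case True
  then obtain k where "m = Some k" "own (g ! k) = own (last g)" "lam (g ! k) \<le> lam (last g)" by blast
  then show thesis using that[of k] m dev by (simp add: next_mode_def)
next
  case False
  then have "next_mode g w m = Some (length g - 1)"
    using dev by (cases m) (auto simp: next_mode_def)
  then show thesis using that[of "length g - 1"] g dev by (simp add: last_conv_nth)
qed

lemma mode_Suc_deviation:
  assumes \<rho>: "is_play E \<rho>" "\<rho> 0 = v0"
    and dev: "own (\<rho> p) = i" "\<rho> (Suc p) \<noteq> spe_profile i (play_prefix \<rho> (Suc p))"
  obtains k where "mode (play_prefix \<rho> (Suc (Suc p))) = Some k" "own (\<rho> k) = i" "lam (\<rho> k) \<le> lam (\<rho> p)"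
proof -
  define g where "g = play_prefix \<rho> (Suc p)"
  have bound: "k < length g" if "mode g = Some k" for k
    using mode_invariant_Some(1)[OF mode_invariant_history[OF is_history_play_prefixI[OF \<rho>]]] that
    by (simp add: g_def)
  obtain k where "k < length g" "next_mode g (\<rho> (Suc p)) (mode g) = Some k"
    "own (g ! k) = i" "lam (g ! k) \<le> lam (last g)"
    by (rule next_mode_deviation[of g "\<rho> (Suc p)" "mode g" i])
      (use dev bound in \<open>auto simp: g_def spe_profile_def\<close>)
  moreover have "mode (play_prefix \<rho> (Suc (Suc p))) = next_mode g (\<rho> (Suc p)) (mode g)"
    using mode_snoc[of g "\<rho> (Suc p)"] by (simp add: g_def play_prefix_Suc[of \<rho> "Suc p"])
  ultimately show thesis using that by (simp add: g_def)
qed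

lemma mode_Suc_punished:
  assumes \<rho>: "is_play E \<rho>" "\<rho> 0 = v0"
    and mode: "mode (play_prefix \<rho> (Suc n)) = Some k" and punished: "own (\<rho> k) = i"
    and follow: "own (\<rho> n) \<noteq> i \<Longrightarrow> \<rho> (Suc n) = spe_profile (own (\<rho> n)) (play_prefix \<rho> (Suc n))"
  shows "mode (play_prefix \<rho> (Suc (Suc n))) = Some k \<or>
         mode (play_prefix \<rho> (Suc (Suc n))) = Some n \<and> own (\<rho> n) = i \<and> lam (\<rho> n) < lam (\<rho> k)"
proof -
  have "k < Suc n"
    using mode_invariant_Some(1)[OF mode_invariant_history[OF is_history_play_prefixI[OF \<rho>]] mode] by simp
  moreover have "mode (play_prefix \<rho> (Suc (Suc n)))
                 = next_mode (play_prefix \<rho> (Suc n)) (\<rho> (Suc n)) (Some k)"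
    using mode_snoc[of "play_prefix \<rho> (Suc n)" "\<rho> (Suc n)"] mode
    by (simp add: play_prefix_Suc[of \<rho> "Suc n"])
  ultimately show ?thesis
    using punished follow mode by (auto simp: next_mode_def spe_profile_def)
qed

text \<open>
The requirement of the punished vertex never increases, and stays equal only if the punished
vertex does; as \<open>lam\<close> takes finitely many values, the punished vertex is eventually constant.
\<close>

lemma mode_after_deviation:
  assumes \<rho>: "is_play E \<rho>" "\<rho> 0 = v0"
    and follow: "\<And>n. p \<le> n \<Longrightarrow> own (\<rho> n) \<noteq> i \<Longrightarrow>
                  \<rho> (Suc n) = spe_profile (own (\<rho> n)) (play_prefix \<rho> (Suc n))"
    and dev: "own (\<rho> p) = i" "\<rho> (Suc p) \<noteq> spe_profile i (play_prefix \<rho> (Suc p))"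
  obtains N k where "\<And>n. N \<le> n \<Longrightarrow> mode (play_prefix \<rho> (Suc n)) = Some k"
    and "own (\<rho> k) = i" and "lam (\<rho> k) \<le> lam (\<rho> p)"
proof -
  define md where "md n = mode (play_prefix \<rho> (Suc n))" for n
  have mode_step: "md (Suc n) = Some k \<or> md (Suc n) = Some n \<and> own (\<rho> n) = i \<and> lam (\<rho> n) < lam (\<rho> k)"
    if "p \<le> n" "md n = Some k" "own (\<rho> k) = i" for n k
    using mode_Suc_punished[OF \<rho>, of n k i] follow[OF that(1)] that(2,3) by (simp add: md_def)
  have punished: "\<exists>k. md n = Some k \<and> own (\<rho> k) = i \<and> lam (\<rho> k) \<le> lam (\<rho> p)" if "Suc p \<le> n" for n
    using that
  proof (induction n rule: dec_induct)
    case base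
    obtain k where "mode (play_prefix \<rho> (Suc (Suc p))) = Some k" "own (\<rho> k) = i" "lam (\<rho> k) \<le> lam (\<rho> p)"
      by (rule mode_Suc_deviation[OF \<rho> dev])
    then show ?case unfolding md_def by blast
  next
    case (step n)
    then obtain k where k: "md n = Some k" "own (\<rho> k) = i" "lam (\<rho> k) \<le> lam (\<rho> p)" by blast
    have "p \<le> n" using step.hyps by simp
    from mode_step[OF this k(1,2)] show ?case using k by (auto intro: order_trans less_imp_le)
  qed
  define K where "K n = the (md n)" for n
  have K: "md n = Some (K n)" "own (\<rho> (K n)) = i" "lam (\<rho> (K n)) \<le> lam (\<rho> p)" if "Suc p \<le> n" for n
    using punished[OF that] by (auto simp: K_def)
  have fin: "finite ((\<lambda>n. lam (\<rho> (K n))) ` {Suc p..})"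
    by (rule finite_subset[OF image_subsetI finite_imageI[OF finite_class.finite_UNIV]]) (rule rangeI)
  have descent: "lam (\<rho> (K (Suc n))) \<le> lam (\<rho> (K n)) \<and>
                 (lam (\<rho> (K (Suc n))) = lam (\<rho> (K n)) \<longrightarrow> K (Suc n) = K n)" if "Suc p \<le> n" for n
  proof -
    have "md (Suc n) = Some (K n) \<or> md (Suc n) = Some n \<and> own (\<rho> n) = i \<and> lam (\<rho> n) < lam (\<rho> (K n))"
      using mode_step[of n "K n"] K(1,2)[OF that] that by simp
    then show ?thesis unfolding K_def by auto
  qed
  obtain M where M: "Suc p \<le> M" "\<And>n. M \<le> n \<Longrightarrow> K n = K M"
    using eventually_const_by_finite_descent[of "\<lambda>n. lam (\<rho> (K n))" "Suc p" K, OF fin descent] by blast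
  show thesis
  proof
    show "mode (play_prefix \<rho> (Suc n)) = Some (K M)" if "M \<le> n" for n
      using K(1)[of n] M(2)[OF that] M(1) that by (simp add: md_def)
  qed (use K(2,3)[OF M(1)] in simp_all)
qed

lemma punished_play_bound:
  assumes \<rho>: "is_play E \<rho>" "\<rho> 0 = v0"
    and mode: "\<And>n. N \<le> n \<Longrightarrow> mode (play_prefix \<rho> (Suc n)) = Some k"
  shows "ereal (\<mu> \<rho> (own (\<rho> k))) \<le> lam (\<rho> k) + ereal \<epsilon>"
proof -
  define u where "u = \<rho> k"
  define i where "i = own u"
  define Z where "Z = play_suffix k \<rho>"
  have inv: "mode_invariant (play_prefix \<rho> (Suc n))" for n
    by (rule mode_invariant_history[OF is_history_play_prefixI[OF \<rho>]])
  note k = mode_invariant_Some[OF inv mode]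
  have k_N: "k < Suc N" and lam_u: "lam u < \<infinity>" using k[of N] by (simp_all add: u_def)
  have punishing: "punishing u (punishment u)" by (rule punishing_punishment[OF lam_u])
  have "Z (Suc m) = punishment u (own (Z m)) (play_prefix Z (Suc m))" if "own (Z m) \<noteq> i" for m
  proof -
    define n where "n = N + k + Suc m"
    have "drop k (play_prefix \<rho> (Suc n)) = play_prefix Z (Suc n - k)"
      by (simp add: Z_def play_prefix_play_suffix n_def ac_simps)
    moreover have "k < Suc n" "N \<le> n" by (simp_all add: n_def)
    ultimately have "compatible_except own i (punishment u) (play_prefix Z (Suc n - k))"
      using k(4)[of n] k_N by (simp add: u_def i_def)
    then show ?thesis using that unfolding compatible_except_play_prefix by (simp add: n_def)
  qed
  moreover have "is_profile E own u (punishment u)" using punishing unfolding punishing_def by blast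
  moreover have "is_play E Z" "Z 0 = u" using \<rho>(1) by (simp_all add: Z_def u_def is_play_def)
  ultimately obtain \<tau> where \<tau>: "is_strategy E own u i \<tau>" and "play_from own ((punishment u)(i := \<tau>)) [u] = Z"
    using compatible_play_is_deviation by metis
  then have "ereal (\<mu> Z i) \<le> lam u + ereal \<epsilon>" using punishing unfolding punishing_def i_def by blast
  moreover have "\<mu> Z = \<mu> \<rho>" unfolding Z_def by (rule prefix_independent_play_suffix[OF prefix_independent \<rho>(1)])
  ultimately show ?thesis by (simp add: u_def i_def)
qed

lemma lam_le_payoff_spe_profile:
  assumes h: "is_history E v0 h" and p: "length h \<le> Suc p"
  shows "lam (play_from own spe_profile h p)
         \<le> ereal (\<mu> (play_from own spe_profile h) (own (play_from own spe_profile h p)))"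
proof -
  define \<pi> where "\<pi> = play_from own spe_profile h"
  define g where "g = play_prefix \<pi> (Suc p)"
  have hne: "h \<noteq> []" using h by (rule is_history_not_Nil)
  have \<pi>: "is_play E \<pi>" "\<pi> 0 = v0"
    using is_play_play_from[OF is_profile_spe_profile h] by (simp_all add: \<pi>_def)
  have "play_from own spe_profile g = \<pi>" unfolding g_def \<pi>_def by (rule play_from_play_prefix[OF hne p])
  moreover have "consistent own \<mu> lam (play_suffix (length g - 1) (play_from own spe_profile g))"
    unfolding g_def by (intro consistent_play_from_spe_profile mode_invariant_history is_history_play_prefixI[OF \<pi>]) simp
  ultimately have "consistent own \<mu> lam (play_suffix p \<pi>)" by (simp add: g_def)
  then have "lam (play_suffix p \<pi> 0) \<le> ereal (\<mu> (\<lambda>k. play_suffix p \<pi> (0 + k)) (own (play_suffix p \<pi> 0)))"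
    unfolding consistent_def by blast
  then show ?thesis
    using prefix_independent_play_suffix[OF prefix_independent \<pi>(1)] by (simp add: play_suffix_def \<pi>_def)
qed

lemma no_profitable_deviation:
  assumes h: "is_history E v0 h" and \<tau>: "is_strategy E own v0 i \<tau>"
  shows "\<mu> (play_from own (spe_profile(i := \<tau>)) h) i \<le> \<mu> (play_from own spe_profile h) i + \<epsilon>"
proof (cases "play_from own (spe_profile(i := \<tau>)) h = play_from own spe_profile h")
  case True
  then show ?thesis using \<epsilon>_nonneg by simp
next
  case False
  define \<rho> where "\<rho> = play_from own (spe_profile(i := \<tau>)) h"
  define \<pi> where "\<pi> = play_from own spe_profile h"
  have hne: "h \<noteq> []" using h by (rule is_history_not_Nil)
  have \<rho>: "is_play E \<rho>" "\<rho> 0 = v0"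
    using is_play_play_from[OF is_profile_fun_upd[OF is_profile_spe_profile \<tau>] h] by (simp_all add: \<rho>_def)
  obtain p where p: "length h \<le> Suc p" and prefix: "play_prefix \<rho> (Suc p) = play_prefix \<pi> (Suc p)"
    and owner: "own (\<pi> p) = i" and dev: "\<rho> (Suc p) \<noteq> \<pi> (Suc p)"
    using first_deviation[OF hne False] unfolding \<rho>_def \<pi>_def by blast
  have \<rho>_p: "\<rho> p = \<pi> p" using prefix by (metis lessI nth_play_prefix)
  have \<pi>_Suc: "\<pi> (Suc p) = spe_profile i (play_prefix \<pi> (Suc p))"
    using play_from_Suc[OF hne p, of own spe_profile] owner by (simp add: \<pi>_def spe_profile_def)
  obtain N k where "\<And>n. N \<le> n \<Longrightarrow> mode (play_prefix \<rho> (Suc n)) = Some k"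
    and k: "own (\<rho> k) = i" "lam (\<rho> k) \<le> lam (\<rho> p)"
  proof (rule mode_after_deviation[OF \<rho>])
    show "\<rho> (Suc n) = spe_profile (own (\<rho> n)) (play_prefix \<rho> (Suc n))" if "p \<le> n" "own (\<rho> n) \<noteq> i" for n
      using play_from_Suc[OF hne, of n own "spe_profile(i := \<tau>)"] p that by (simp add: \<rho>_def)
  qed (use owner \<rho>_p dev \<pi>_Suc prefix in auto)
  then have "ereal (\<mu> \<rho> i) \<le> lam (\<rho> k) + ereal \<epsilon>" using punished_play_bound[OF \<rho>] by metis
  also have "\<dots> \<le> lam (\<rho> p) + ereal \<epsilon>" using k(2) by (rule add_right_mono)
  also have "\<dots> \<le> ereal (\<mu> \<pi> i) + ereal \<epsilon>"
    using lam_le_payoff_spe_profile[OF h p] owner \<rho>_p by (intro add_right_mono) (simp add: \<pi>_def)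
  finally show ?thesis by (simp add: \<rho>_def \<pi>_def)
qed

theorem eps_SPE_spe_profile: "eps_SPE E own \<mu> \<epsilon> v0 spe_profile"
  unfolding eps_SPE_iff using is_profile_spe_profile no_profitable_deviation by blast

end

theorem theorem2:
  fixes E :: "('v::finite \<times> 'v) set" and own :: "'v \<Rightarrow> 'p::finite"
    and \<mu> :: "(nat \<Rightarrow> 'v) \<Rightarrow> 'p \<Rightarrow> real" and \<epsilon> :: real and v0 :: 'v
    and lam_star :: "'v \<Rightarrow> ereal" and \<xi> :: "nat \<Rightarrow> 'v"
  assumes "game E"
    and "prefix_independent E \<mu>"
    and "\<epsilon> \<ge> 0"
    and "least_eps_fixed_point E own \<mu> \<epsilon> lam_star"
    and "is_play E \<xi>" and "\<xi> 0 = v0"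
  shows "((\<exists>\<sigma>. eps_SPE E own \<mu> \<epsilon> v0 \<sigma> \<and> outcome own \<sigma> v0 = \<xi>) \<longrightarrow> consistent own \<mu> lam_star \<xi>)
       \<and> (steady_negotiation E own \<mu> \<and> consistent own \<mu> lam_star \<xi>
            \<longrightarrow> (\<exists>\<sigma>. eps_SPE E own \<mu> \<epsilon> v0 \<sigma> \<and> outcome own \<sigma> v0 = \<xi>))"
proof (intro conjI impI)
  assume "\<exists>\<sigma>. eps_SPE E own \<mu> \<epsilon> v0 \<sigma> \<and> outcome own \<sigma> v0 = \<xi>"
  then show "consistent own \<mu> lam_star \<xi>"
    using eps_SPE_outcome_consistent[OF assms(2,4,3)] by blast
next
  assume "steady_negotiation E own \<mu> \<and> consistent own \<mu> lam_star \<xi>"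
  moreover have "eps_fixed_point E own \<mu> \<epsilon> lam_star"
    using assms(4) unfolding least_eps_fixed_point_def by blast
  ultimately interpret spe_construction E own \<mu> \<epsilon> lam_star \<xi> v0
    using assms by unfold_locales auto
  show "\<exists>\<sigma>. eps_SPE E own \<mu> \<epsilon> v0 \<sigma> \<and> outcome own \<sigma> v0 = \<xi>"
    using eps_SPE_spe_profile outcome_spe_profile by blast
qed

end
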